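(* Fix integers $K>1$, $M>1$, a cost $C\ge 0$, and $\delta\in(0,1)$. For every problem instance $\boldsymbol{\mu}=[\mu_{k,m}]\in\mathbb{R}^{K\times M}$ having a unique local best arm $k_m^*$ at every client $m$ and a unique global best arm $k^*$, the algorithm FedElim (run with confidence parameter $\delta$) terminates with outputs $(\hat k_1^*,\dots,\hat k_M^*,\hat k^* )$ satisfying $$P_{\boldsymbol{\mu}}\big((\hat k_1^*,\dots,\hat k_M^*,\hat k^* )=(k_1^*,\dots,k_M^*,k^* )\big)\ge 1-\delta,$$ i.e. FedElim is $\delta$-PAC.
   Context: Setting: there are $M$ clients and a server; each client $m\in[M]$ has $K$ arms indexed by $[K]=\{1,\dots,K\}$. For each pair $(k,m)$, arm $k$ of client $m$ produces rewards $X_{k,m}(1),X_{k,m}(2),\dots$ that are i.i.d. Gaussian with unknown mean $\mu_{k,m}$ and variance $1$, independent across pairs. The $i$-th pull of arm $k$ at client $m$ reveals $X_{k,m}(i)$. Write $\hat\mu_{k,m}(n)=\frac1n\sum_{i=1}^n X_{k,m}(i)$ and $\hat\mu_k(n)=\frac1M\sum_{m=1}^M\hat\mu_{k,m}(n)$. Local best arm: $k_m^*=\arg\max_k\mu_{k,m}$; global mean $\mu_k=\frac1M\sum_m\mu_{k,m}$ and global best arm $k^*=\arg\max_k\mu_k$ (both assumed unique). Confidence parameters: $\alpha_{\mathrm l}(n)=\sqrt{2\ln(8KMn^2/\delta)/n}$ and $\alpha_{\mathrm g}(n)=\sqrt{2\ln(8Kn^2/\delta)/(Mn)}$. Algorithm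 FedElim (and its variant FedElim0). Initialize $\mathcal S_{\mathrm l,m}=[K]$ for every $m$ and $\mathcal S_{\mathrm g}=[K]$. For $n=1,2,\dots$: (i) for each client $m$: let $\mathcal S_m=\mathcal S_{\mathrm l,m}\cup\mathcal S_{\mathrm g}$; if $|\mathcal S_m|>1$, pull each arm in $\mathcal S_m$ once (so every active arm has been pulled $n$ times and its empirical mean is $\hat\mu_{k,m}(n)$). If $|\mathcal S_{\mathrm l,m}|>1$, remove from $\mathcal S_{\mathrm l,m}$ every $k$ with $\max_{j\in\mathcal S_{\mathrm l,m}}\hat\mu_{j,m}(n)-\hat\mu_{k,m}(n)\ge 2\alpha_{\mathrm l}(n)$. If then $|\mathcal S_{\mathrm l,m}|=1$, output its element as $\hat k_m^*$ and set $\mathcal S_{\mathrm l,m}=\emptyset$. (ii) Communication: if $|\mathcal S_{\mathrm g}|>1$ and $n$ is a communication time step — for FedElim this means $n=2^t$ for some integer $t\ge0$; for FedElim0 every $n$ is a communication time step — then each client $m$ sends the scalars $\hat\mu_{k,m}(n)$, $k\in\mathcal S_{\mathrm g}$, to the server, each scalar sent costing $C$; the server removes from $\mathcal S_{\mathrm g}$ every $k$ with $\max_{j\in\mathcal S_{\mathrm g}}\hat\mu_j(n)-\hat\mu_k(n)\ge 2\alpha_{\mathrm g}(n)$. If $|\mathcal S_{\mathrm g}|=1$, output its element as $\hat k^*$ and set $\mathcal S_{\mathrm g}=\emptyset$. (iii) Terminate once $\mathcal S_{\mathrm l,m}\cup\mathcal S_{\mathrm g}=\emptyset$ for all $m$.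 An algorithm is $\delta$-PAC if for every such instance $\boldsymbol\mu$ it outputs the correct vector $(k_1^*,\dots,k_M^*,k^* )$ with probability at least $1-\delta$. *)

theory Defs
  imports "HOL-Probability.Probability"
begin

text \<open>Arms are indexed by 0..K-1, clients by 0..M-1. A sample point omega assigns to
  (k, m, i) the reward of the (i+1)-th pull of arm k at client m.\<close>

definition reward_space :: "nat \<Rightarrow> nat \<Rightarrow> (nat \<Rightarrow> nat \<Rightarrow> real) \<Rightarrow> (nat \<times> nat \<times> nat \<Rightarrow> real) measure" where
  "reward_space K M mu =
     PiM ({..<K} \<times> {..<M} \<times> UNIV) (\<lambda>(k, m, i). density lborel (normal_density (mu k m) 1))"

definition emp_mean :: "(nat \<times> nat \<times> nat \<Rightarrow> real) \<Rightarrow> nat \<Rightarrow> nat \<Rightarrow> nat \<Rightarrow> real" where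
  "emp_mean \<omega> k m n = (\<Sum>i<n. \<omega> (k, m, i)) / real n"

definition glob_emp_mean :: "nat \<Rightarrow> (nat \<times> nat \<times> nat \<Rightarrow> real) \<Rightarrow> nat \<Rightarrow> nat \<Rightarrow> real" where
  "glob_emp_mean M \<omega> k n = (\<Sum>m<M. emp_mean \<omega> k m n) / real M"

definition alpha_l :: "nat \<Rightarrow> nat \<Rightarrow> real \<Rightarrow> nat \<Rightarrow> real" where
  "alpha_l K M \<delta> n = sqrt (2 * ln (8 * real K * real M * (real n)^2 / \<delta>) / real n)"

definition alpha_g :: "nat \<Rightarrow> nat \<Rightarrow> real \<Rightarrow> nat \<Rightarrow> real" where
  "alpha_g K M \<delta> n = sqrt (2 * ln (8 * real K * (real n)^2 / \<delta>) / (real M * real n))"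

definition elim_step :: "nat set \<Rightarrow> (nat \<Rightarrow> real) \<Rightarrow> real \<Rightarrow> nat set \<times> nat option" where
  "elim_step S f a =
     (if card S > 1 then
        (let S' = {k \<in> S. \<not> (Max (f ` S) - f k \<ge> 2 * a)} in
         if card S' = 1 then ({}, Some (the_elem S')) else (S', None))
      else (S, None))"

record fe_state =
  loc_set :: "nat \<Rightarrow> nat set"
  glob_set :: "nat set"
  loc_out :: "nat \<Rightarrow> nat option"
  glob_out :: "nat option"

definition fe_init :: "nat \<Rightarrow> fe_state" where
  "fe_init K = \<lparr>loc_set = (\<lambda>m. {..<K}), glob_set = {..<K}, loc_out = (\<lambda>m. None), glob_out = None\<rparr>"

text \<open>Every arm active at round n has been pulled exactly n times, so its empirical mean is
  the mean of its first n rewards.\<close>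
definition fe_round :: "(nat \<Rightarrow> bool) \<Rightarrow> nat \<Rightarrow> nat \<Rightarrow> real \<Rightarrow> (nat \<times> nat \<times> nat \<Rightarrow> real)
    \<Rightarrow> nat \<Rightarrow> fe_state \<Rightarrow> fe_state" where
  "fe_round comm K M \<delta> \<omega> n s =
     (let loc = (\<lambda>m. elim_step (loc_set s m) (\<lambda>k. emp_mean \<omega> k m n) (alpha_l K M \<delta> n));
          s1 = s\<lparr>loc_set := (\<lambda>m. fst (loc m)),
                 loc_out := (\<lambda>m. case snd (loc m) of None \<Rightarrow> loc_out s m | Some k \<Rightarrow> Some k)\<rparr>
      in if comm n \<and> card (glob_set s1) > 1 then
           (let g = elim_step (glob_set s1) (\<lambda>k. glob_emp_mean M \<omega> k n) (alpha_g K M \<delta> n)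
            in s1\<lparr>glob_set := fst g,
                  glob_out := (case snd g of None \<Rightarrow> glob_out s1 | Some k \<Rightarrow> Some k)\<rparr>)
         else s1)"

fun fe_state_after :: "(nat \<Rightarrow> bool) \<Rightarrow> nat \<Rightarrow> nat \<Rightarrow> real \<Rightarrow> (nat \<times> nat \<times> nat \<Rightarrow> real)
    \<Rightarrow> nat \<Rightarrow> fe_state" where
  "fe_state_after comm K M \<delta> \<omega> 0 = fe_init K"
| "fe_state_after comm K M \<delta> \<omega> (Suc n) =
     fe_round comm K M \<delta> \<omega> (Suc n) (fe_state_after comm K M \<delta> \<omega> n)"

definition fedelim_comm :: "nat \<Rightarrow> bool" where
  "fedelim_comm n = (\<exists>t. n = 2 ^ t)"

definition fedelim_correct :: "nat \<Rightarrow> nat \<Rightarrow> real \<Rightarrow> (nat \<Rightarrow> nat) \<Rightarrow> nat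
    \<Rightarrow> (nat \<times> nat \<times> nat \<Rightarrow> real) \<Rightarrow> bool" where
  "fedelim_correct K M \<delta> kl kg \<omega> =
     (\<exists>n. let s = fe_state_after fedelim_comm K M \<delta> \<omega> n in
          (\<forall>m<M. loc_set s m = {}) \<and> glob_set s = {} \<and>
          (\<forall>m<M. loc_out s m = Some (kl m)) \<and> glob_out s = Some kg)"

end

theory Submission
  imports Defs "HOL-Real_Asymp.Real_Asymp"
begin

text \<open>
  An empirical mean of \<open>N\<close> unit-variance Gaussian rewards is Gaussian with variance \<open>1 / N\<close>,
  so by the Chernoff bound it leaves its confidence radius at round \<open>n\<close> with probability
  \<open>\<delta> / (4 K M n\<^sup>2)\<close> (local) resp. \<open>\<delta> / (4 K n\<^sup>2)\<close> (global). A union bound over arms, clients and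
  rounds shows that with probability at least \<open>1 - \<delta>\<close> all estimates stay inside their radii
  forever. On that event the best arm is never eliminated, since it would have to trail some arm
  by \<open>2\<alpha>\<close> although both are \<open>\<alpha>\<close>-close to their means; and as the radii tend to zero, at the first
  active round where they drop below a quarter of every gap all other arms are eliminated at once.
  The global elimination is active at the infinitely many times \<open>2\<^sup>t\<close>, so it terminates as well.
\<close>

section \<open>Gaussian tails\<close>

lemma normal_density_exp_tilt:
  assumes "\<sigma> > 0"
  shows "exp (d * (x - \<mu>)) * normal_density \<mu> \<sigma> x
           = exp (d\<^sup>2 * \<sigma>\<^sup>2 / 2) * normal_density (\<mu> + d * \<sigma>\<^sup>2) \<sigma> x"
proof -
  have "d * (x - \<mu>) + - (x - \<mu>)\<^sup>2 / (2 * \<sigma>\<^sup>2)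
      = d\<^sup>2 * \<sigma>\<^sup>2 / 2 + - (x - (\<mu> + d * \<sigma>\<^sup>2))\<^sup>2 / (2 * \<sigma>\<^sup>2)"
    using assms by (simp add: field_simps power2_eq_square)
  then have "exp (d * (x - \<mu>)) * exp (- (x - \<mu>)\<^sup>2 / (2 * \<sigma>\<^sup>2))
      = exp (d\<^sup>2 * \<sigma>\<^sup>2 / 2) * exp (- (x - (\<mu> + d * \<sigma>\<^sup>2))\<^sup>2 / (2 * \<sigma>\<^sup>2))"
    by (simp only: exp_add[symmetric])
  then show ?thesis
    unfolding normal_density_def by (simp add: algebra_simps)
qed

lemma nn_integral_exp_normal_density:
  assumes "\<sigma> > 0"
  shows "(\<integral>\<^sup>+x. ennreal (exp (d * (x - \<mu>)) * normal_density \<mu> \<sigma> x) \<partial>lborel) = exp (d\<^sup>2 * \<sigma>\<^sup>2 / 2)"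
proof -
  have "(\<integral>\<^sup>+x. ennreal (exp (d * (x - \<mu>)) * normal_density \<mu> \<sigma> x) \<partial>lborel)
      = ennreal (exp (d\<^sup>2 * \<sigma>\<^sup>2 / 2)) * (\<integral>\<^sup>+x. ennreal (normal_density (\<mu> + d * \<sigma>\<^sup>2) \<sigma> x) \<partial>lborel)"
    using assms by (simp add: normal_density_exp_tilt ennreal_mult nn_integral_cmult)
  also have "(\<integral>\<^sup>+x. ennreal (normal_density (\<mu> + d * \<sigma>\<^sup>2) \<sigma> x) \<partial>lborel) = 1"
    using assms by (subst nn_integral_eq_integral) auto
  finally show ?thesis by simp
qed

lemma one_le_exp_add_exp_neg:
  fixes c t y :: real
  assumes "0 \<le> c" and "t \<le> \<bar>y\<bar>"
  shows "1 \<le> exp (c * (y - t)) + exp (c * (- y - t))"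
proof (cases "0 \<le> y")
  case True
  then have "1 \<le> exp (c * (y - t))" using assms by simp
  then show ?thesis using exp_gt_zero[of "c * (- y - t)"] by linarith
next
  case False
  then have "1 \<le> exp (c * (- y - t))" using assms by simp
  then show ?thesis using exp_gt_zero[of "c * (y - t)"] by linarith
qed

text \<open>Chernoff bound, with the exponential moment optimised at \<open>c = t / \<sigma>\<^sup>2\<close>.\<close>

lemma normal_density_two_sided_tail:
  assumes "\<sigma> > 0" and "t > 0"
  shows "(\<integral>\<^sup>+x. ennreal (normal_density \<mu> \<sigma> x) * indicator {x. t \<le> \<bar>x - \<mu>\<bar>} x \<partial>lborel)
           \<le> 2 * exp (- t\<^sup>2 / (2 * \<sigma>\<^sup>2))"
proof -
  define c where "c = t / \<sigma>\<^sup>2"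
  have "c > 0" using assms by (simp add: c_def)
  define g where "g d x = ennreal (exp (- (c * t)) * (exp (d * (x - \<mu>)) * normal_density \<mu> \<sigma> x))" for d x
  have pointwise: "ennreal (normal_density \<mu> \<sigma> x) * indicator {x. t \<le> \<bar>x - \<mu>\<bar>} x \<le> g c x + g (- c) x"
    for x
  proof (cases "t \<le> \<bar>x - \<mu>\<bar>")
    case True
    have "normal_density \<mu> \<sigma> x
        \<le> (exp (c * (x - \<mu> - t)) + exp (c * (- (x - \<mu>) - t))) * normal_density \<mu> \<sigma> x"
      using mult_right_mono[OF one_le_exp_add_exp_neg[OF less_imp_le[OF \<open>c > 0\<close>] True]
          normal_density_nonneg] by simp
    also have "\<dots> = exp (- (c * t)) * (exp (c * (x - \<mu>)) * normal_density \<mu> \<sigma> x)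
        + exp (- (c * t)) * (exp (- c * (x - \<mu>)) * normal_density \<mu> \<sigma> x)"
      by (simp add: algebra_simps flip: exp_add)
    finally show ?thesis
      using True by (simp add: g_def flip: ennreal_plus)
  qed (simp add: g_def)
  have "(\<integral>\<^sup>+x. ennreal (normal_density \<mu> \<sigma> x) * indicator {x. t \<le> \<bar>x - \<mu>\<bar>} x \<partial>lborel)
      \<le> (\<integral>\<^sup>+x. g c x + g (- c) x \<partial>lborel)"
    by (intro nn_integral_mono pointwise)
  also have "\<dots> = (\<integral>\<^sup>+x. g c x \<partial>lborel) + (\<integral>\<^sup>+x. g (- c) x \<partial>lborel)"
    by (rule nn_integral_add) (auto simp: g_def)
  also have "\<dots> = 2 * ennreal (exp (- (c * t)) * exp (c\<^sup>2 * \<sigma>\<^sup>2 / 2))"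
  proof -
    have "(\<integral>\<^sup>+x. g d x \<partial>lborel) = ennreal (exp (- (c * t)) * exp (d\<^sup>2 * \<sigma>\<^sup>2 / 2))" for d
      using nn_integral_exp_normal_density[OF \<open>\<sigma> > 0\<close>, of d \<mu>]
      by (simp add: g_def ennreal_mult nn_integral_cmult)
    then show ?thesis by (simp add: mult_2)
  qed
  also have "exp (- (c * t)) * exp (c\<^sup>2 * \<sigma>\<^sup>2 / 2) = exp (- t\<^sup>2 / (2 * \<sigma>\<^sup>2))"
    using assms by (simp add: c_def field_simps power2_eq_square flip: exp_add)
  finally show ?thesis
    by (simp add: ennreal_mult)
qed

lemma PiM_normal_sum_deviation:
  fixes \<nu> :: "'i \<Rightarrow> real" and I J :: "'i set"
  defines "N \<equiv> \<lambda>j. density lborel (normal_density (\<nu> j) 1)"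
  assumes "J \<subseteq> I" and "finite J" and "J \<noteq> {}" and "t > 0"
  shows "measure (PiM I N) {\<omega> \<in> space (PiM I N). t \<le> \<bar>(\<Sum>j\<in>J. \<omega> j) - (\<Sum>j\<in>J. \<nu> j)\<bar>}
           \<le> 2 * exp (- t\<^sup>2 / (2 * real (card J)))"
proof -
  interpret product_prob_space N I
    by (rule product_prob_spaceI) (simp add: N_def prob_space_normal_density)
  have sets_N: "sets (N j) = sets borel" for j by (simp add: N_def)
  have coord: "(\<lambda>\<omega>. \<omega> j) \<in> borel_measurable (PiM I N)" if "j \<in> I" for j
    using measurable_component_singleton[OF that, of N] by (simp add: sets_N cong: measurable_cong_sets)
  have distr_coord: "distr (PiM I N) borel (\<lambda>\<omega>. \<omega> j) = N j" if "j \<in> I" for j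
    using PiM_component[OF that] by (simp add: sets_N cong: distr_cong)
  have "distributed (PiM I N) lborel (\<lambda>\<omega>. \<omega> j) (normal_density (\<nu> j) 1)" if "j \<in> J" for j
    using that \<open>J \<subseteq> I\<close> distr_coord coord
    by (auto simp: distributed_def N_def cong: distr_cong measurable_cong_sets)
  moreover have "indep_vars (\<lambda>_. borel) (\<lambda>j \<omega>. \<omega> j) J"
  proof (subst indep_vars_iff_distr_eq_PiM'[OF \<open>J \<noteq> {}\<close>])
    show "random_variable borel (\<lambda>\<omega>. \<omega> j)" if "j \<in> J" for j
      using coord that \<open>J \<subseteq> I\<close> by auto
    have "distr (PiM I N) (PiM J (\<lambda>_. borel)) (\<lambda>x. restrict x J) = distr (PiM I N) (PiM J N) (\<lambda>x. restrict x J)"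
      by (rule distr_cong) (auto intro!: sets_PiM_cong simp: sets_N)
    also have "\<dots> = PiM J N"
      using \<open>finite J\<close> \<open>J \<subseteq> I\<close> by (rule distr_PiM_restrict_finite)
    also have "\<dots> = PiM J (\<lambda>j. distr (PiM I N) borel (\<lambda>\<omega>. \<omega> j))"
      using \<open>J \<subseteq> I\<close> by (intro PiM_cong) (auto simp: distr_coord)
    finally show "distr (PiM I N) (PiM J (\<lambda>_. borel)) (\<lambda>x. restrict x J)
        = PiM J (\<lambda>j. distr (PiM I N) borel (\<lambda>\<omega>. \<omega> j))" .
  qed
  ultimately have "distributed (PiM I N) lborel (\<lambda>\<omega>. \<Sum>j\<in>J. \<omega> j)
      (normal_density (\<Sum>j\<in>J. \<nu> j) (sqrt (real (card J))))"
    using sum_indep_normal[OF \<open>finite J\<close> \<open>J \<noteq> {}\<close>, of "\<lambda>j \<omega>. \<omega> j" "\<lambda>_. 1" \<nu>] by simp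
  moreover have "{x. t \<le> \<bar>x - (\<Sum>j\<in>J. \<nu> j)\<bar>} \<in> sets lborel" by measurable
  ultimately have "emeasure (PiM I N) {\<omega> \<in> space (PiM I N). t \<le> \<bar>(\<Sum>j\<in>J. \<omega> j) - (\<Sum>j\<in>J. \<nu> j)\<bar>}
      = (\<integral>\<^sup>+x. ennreal (normal_density (\<Sum>j\<in>J. \<nu> j) (sqrt (real (card J))) x)
              * indicator {x. t \<le> \<bar>x - (\<Sum>j\<in>J. \<nu> j)\<bar>} x \<partial>lborel)"
    by (subst distributed_emeasure[symmetric]) (auto intro!: arg_cong[where f = "emeasure _"])
  also have "\<dots> \<le> 2 * exp (- t\<^sup>2 / (2 * real (card J)))"
    using normal_density_two_sided_tail[of "sqrt (real (card J))" t] \<open>finite J\<close> \<open>J \<noteq> {}\<close> \<open>t > 0\<close>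
    by (simp add: card_gt_0_iff)
  finally show ?thesis
    by (simp add: emeasure_eq_measure ennreal_le_iff del: ennreal_numeral)
qed

lemma PiM_normal_mean_deviation:
  fixes \<nu> :: "'i \<Rightarrow> real" and I J :: "'i set"
  defines "N \<equiv> \<lambda>j. density lborel (normal_density (\<nu> j) 1)"
  assumes "J \<subseteq> I" and "finite J" and "J \<noteq> {}" and "X > 1"
  shows "measure (PiM I N) {\<omega> \<in> space (PiM I N). sqrt (2 * ln X / card J)
           \<le> \<bar>(\<Sum>j\<in>J. \<omega> j) / card J - (\<Sum>j\<in>J. \<nu> j) / card J\<bar>} \<le> 2 / X"
proof -
  define d where "d = real (card J)"
  define a where "a = sqrt (2 * ln X / d)"
  have "d > 0" using assms by (simp add: d_def card_gt_0_iff)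
  have "ln X > 0" using \<open>X > 1\<close> by simp
  then have "a > 0" and a2: "a\<^sup>2 = 2 * ln X / d" using \<open>d > 0\<close> by (simp_all add: a_def)
  have "a \<le> \<bar>s / d - r / d\<bar> \<longleftrightarrow> d * a \<le> \<bar>s - r\<bar>" for s r
    using \<open>d > 0\<close> by (simp add: diff_divide_distrib[symmetric] le_divide_eq mult.commute)
  then have "{\<omega> \<in> space (PiM I N). a \<le> \<bar>(\<Sum>j\<in>J. \<omega> j) / d - (\<Sum>j\<in>J. \<nu> j) / d\<bar>}
      = {\<omega> \<in> space (PiM I N). d * a \<le> \<bar>(\<Sum>j\<in>J. \<omega> j) - (\<Sum>j\<in>J. \<nu> j)\<bar>}"
    by blast
  moreover have "measure (PiM I N) {\<omega> \<in> space (PiM I N). d * a \<le> \<bar>(\<Sum>j\<in>J. \<omega> j) - (\<Sum>j\<in>J. \<nu> j)\<bar>}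
      \<le> 2 * exp (- (d * a)\<^sup>2 / (2 * d))"
    unfolding N_def d_def using assms \<open>a > 0\<close> \<open>d > 0\<close>
    by (intro PiM_normal_sum_deviation) (auto simp: d_def)
  moreover have "(d * a)\<^sup>2 / (2 * d) = ln X"
    using \<open>d > 0\<close> by (simp only: power_mult_distrib a2) (simp add: power2_eq_square)
  ultimately show ?thesis
    using \<open>X > 1\<close> by (simp add: a_def d_def exp_minus inverse_eq_divide)
qed

section \<open>Deviation of the empirical means\<close>

lemma reward_space_eq_PiM:
  "reward_space K M mu = PiM ({..<K} \<times> {..<M} \<times> UNIV)
     (\<lambda>j. density lborel (normal_density ((\<lambda>(k, m, i). mu k m) j) 1))"
  unfolding reward_space_def by (intro PiM_cong) (auto split: prod.split)

lemma prob_emp_mean_deviation: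
  assumes "k < K" and "m < M" and "n > 0" and "0 < \<delta>" and "\<delta> < 1"
  shows "measure (reward_space K M mu) {\<omega> \<in> space (reward_space K M mu).
           alpha_l K M \<delta> n \<le> \<bar>emp_mean \<omega> k m n - mu k m\<bar>} \<le> \<delta> / (4 * real K * real M * (real n)\<^sup>2)"
proof -
  define J where "J = (\<lambda>i. (k, m, i)) ` {..<n}"
  define X where "X = 8 * real K * real M * (real n)\<^sup>2 / \<delta>"
  have inj: "inj_on (\<lambda>i. (k, m, i)) {..<n}" by (auto simp: inj_on_def)
  have card_J: "card J = n" by (simp add: J_def card_image[OF inj])
  have sum_J: "(\<Sum>j\<in>J. f j) = (\<Sum>i<n. f (k, m, i))" for f :: "nat \<times> nat \<times> nat \<Rightarrow> real"
    by (simp add: J_def sum.reindex[OF inj])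
  have "1 * 1 * 1 \<le> real K * real M * (real n)\<^sup>2"
    using assms by (intro mult_mono) (auto simp: one_le_power)
  then have "X > 1" using assms by (simp add: X_def field_simps)
  have "emp_mean \<omega> k m n = (\<Sum>j\<in>J. \<omega> j) / card J" for \<omega>
    by (simp add: emp_mean_def sum_J card_J)
  moreover have "mu k m = (\<Sum>j\<in>J. (\<lambda>(k, m, i). mu k m) j) / card J"
    using \<open>n > 0\<close> by (simp add: sum_J card_J)
  moreover have "alpha_l K M \<delta> n = sqrt (2 * ln X / card J)"
    by (simp add: alpha_l_def X_def card_J)
  moreover have "J \<subseteq> {..<K} \<times> {..<M} \<times> UNIV" "J \<noteq> {}"
    using assms by (auto simp: J_def)
  ultimately have "measure (reward_space K M mu) {\<omega> \<in> space (reward_space K M mu).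
      alpha_l K M \<delta> n \<le> \<bar>emp_mean \<omega> k m n - mu k m\<bar>} \<le> 2 / X"
    unfolding reward_space_eq_PiM using \<open>X > 1\<close>
    by (simp only:) (rule PiM_normal_mean_deviation, auto simp: J_def)
  also have "2 / X = \<delta> / (4 * real K * real M * (real n)\<^sup>2)"
    by (simp add: X_def)
  finally show ?thesis .
qed

lemma prob_glob_emp_mean_deviation:
  assumes "k < K" and "M > 0" and "n > 0" and "0 < \<delta>" and "\<delta> < 1"
  shows "measure (reward_space K M mu) {\<omega> \<in> space (reward_space K M mu).
           alpha_g K M \<delta> n \<le> \<bar>glob_emp_mean M \<omega> k n - (\<Sum>m<M. mu k m) / M\<bar>} \<le> \<delta> / (4 * real K * (real n)\<^sup>2)"
proof -
  define J where "J = (\<lambda>(m, i). (k, m, i)) ` ({..<M} \<times> {..<n})"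
  define X where "X = 8 * real K * (real n)\<^sup>2 / \<delta>"
  have inj: "inj_on (\<lambda>(m, i). (k, m, i)) ({..<M} \<times> {..<n})" by (auto simp: inj_on_def)
  have card_J: "card J = M * n"
    unfolding J_def by (subst card_image[OF inj]) (simp add: card_cartesian_product)
  have sum_J: "(\<Sum>j\<in>J. f j) = (\<Sum>m<M. \<Sum>i<n. f (k, m, i))" for f :: "nat \<times> nat \<times> nat \<Rightarrow> real"
    unfolding J_def by (subst sum.reindex[OF inj]) (simp add: sum.cartesian_product case_prod_beta)
  have "1 * 1 \<le> real K * (real n)\<^sup>2"
    using assms by (intro mult_mono) (auto simp: one_le_power)
  then have "X > 1" using assms by (simp add: X_def field_simps)
  have "glob_emp_mean M \<omega> k n = (\<Sum>j\<in>J. \<omega> j) / card J" for \<omega>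
    by (simp add: glob_emp_mean_def emp_mean_def sum_J card_J sum_divide_distrib[symmetric])
  moreover have "(\<Sum>m<M. mu k m) / M = (\<Sum>j\<in>J. (\<lambda>(k, m, i). mu k m) j) / card J"
    using \<open>n > 0\<close> by (simp add: sum_J card_J sum_distrib_left[symmetric])
  moreover have "alpha_g K M \<delta> n = sqrt (2 * ln X / card J)"
    by (simp add: alpha_g_def X_def card_J)
  moreover have "J \<subseteq> {..<K} \<times> {..<M} \<times> UNIV" "J \<noteq> {}"
    using assms by (auto simp: J_def)
  ultimately have "measure (reward_space K M mu) {\<omega> \<in> space (reward_space K M mu).
      alpha_g K M \<delta> n \<le> \<bar>glob_emp_mean M \<omega> k n - (\<Sum>m<M. mu k m) / M\<bar>} \<le> 2 / X"
    unfolding reward_space_eq_PiM using \<open>X > 1\<close>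
    by (simp only:) (rule PiM_normal_mean_deviation, auto simp: J_def)
  also have "2 / X = \<delta> / (4 * real K * (real n)\<^sup>2)"
    by (simp add: X_def)
  finally show ?thesis .
qed

section \<open>Successive elimination with confident estimates\<close>

definition elim_update :: "nat set \<times> nat option \<Rightarrow> (nat \<Rightarrow> real) \<Rightarrow> real \<Rightarrow> nat set \<times> nat option" where
  "elim_update x f a =
     (fst (elim_step (fst x) f a),
      case snd (elim_step (fst x) f a) of None \<Rightarrow> snd x | Some k \<Rightarrow> Some k)"

definition elim_on_track :: "nat set \<Rightarrow> nat \<Rightarrow> nat set \<times> nat option \<Rightarrow> bool" where
  "elim_on_track A b x \<longleftrightarrow>
     x = ({}, Some b) \<or> (b \<in> fst x \<and> fst x \<subseteq> A \<and> 1 < card (fst x) \<and> snd x = None)"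

lemma elim_update_finished [simp]: "elim_update ({}, Some b) f a = ({}, Some b)"
  by (simp add: elim_update_def elim_step_def)

lemma elim_step_keeps_best:
  fixes f v :: "nat \<Rightarrow> real"
  assumes "finite S" and "b \<in> S"
    and "\<forall>k\<in>S. \<bar>f k - v k\<bar> < a" and "\<forall>k\<in>S. k \<noteq> b \<longrightarrow> v k < v b"
  shows "\<not> 2 * a \<le> Max (f ` S) - f b"
proof -
  have "Max (f ` S) \<in> f ` S" using assms(1,2) by (intro Max_in) auto
  then obtain j where "j \<in> S" and "Max (f ` S) = f j" by auto
  moreover have "\<bar>f b - v b\<bar> < a" using assms(2,3) by blast
  moreover have "j \<noteq> b \<Longrightarrow> v j < v b \<and> \<bar>f j - v j\<bar> < a" using \<open>j \<in> S\<close> assms(3,4) by blast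
  ultimately show ?thesis by (cases "j = b") auto
qed

lemma elim_update_preserves_on_track:
  fixes f v :: "nat \<Rightarrow> real"
  assumes "finite A" and "elim_on_track A b x"
    and "\<forall>k\<in>A. \<bar>f k - v k\<bar> < a" and "\<forall>k\<in>A. k \<noteq> b \<longrightarrow> v k < v b"
  shows "elim_on_track A b (elim_update x f a)"
proof (cases "x = ({}, Some b)")
  case False
  then obtain S where x: "x = (S, None)" and "b \<in> S" "S \<subseteq> A" "1 < card S"
    using assms(2) by (cases x) (auto simp: elim_on_track_def)
  define S' where "S' = {k \<in> S. \<not> 2 * a \<le> Max (f ` S) - f k}"
  have "finite S" using \<open>S \<subseteq> A\<close> \<open>finite A\<close> finite_subset by blast
  have "\<forall>k\<in>S. \<bar>f k - v k\<bar> < a" and "\<forall>k\<in>S. k \<noteq> b \<longrightarrow> v k < v b"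
    using assms(3,4) \<open>S \<subseteq> A\<close> by auto
  then have "b \<in> S'"
    using elim_step_keeps_best[OF \<open>finite S\<close> \<open>b \<in> S\<close>] \<open>b \<in> S\<close> by (simp add: S'_def)
  have "S' \<subseteq> S" by (auto simp: S'_def)
  then have "finite S'" using \<open>finite S\<close> finite_subset by blast
  have step: "elim_update x f a = (if card S' = 1 then ({}, Some (the_elem S')) else (S', None))"
    using \<open>1 < card S\<close> by (simp add: x elim_update_def elim_step_def S'_def Let_def)
  show ?thesis
  proof (cases "card S' = 1")
    case True
    then have "S' = {b}" using \<open>b \<in> S'\<close> by (auto simp: card_Suc_eq)
    then show ?thesis by (simp add: step elim_on_track_def)
  next
    case False
    then have "1 < card S'" using \<open>b \<in> S'\<close> \<open>finite S'\<close> by (cases "card S'") auto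
    then show ?thesis
      using False step \<open>b \<in> S'\<close> \<open>S' \<subseteq> S\<close> \<open>S \<subseteq> A\<close> by (simp add: elim_on_track_def)
  qed
qed (simp add: elim_on_track_def)

lemma elim_update_separated:
  fixes f v :: "nat \<Rightarrow> real"
  assumes "finite A" and "elim_on_track A b x"
    and "\<forall>k\<in>A. \<bar>f k - v k\<bar> < a" and "\<forall>k\<in>A. k \<noteq> b \<longrightarrow> v k < v b"
    and "\<forall>k\<in>A. k \<noteq> b \<longrightarrow> 4 * a \<le> v b - v k"
  shows "elim_update x f a = ({}, Some b)"
proof (cases "x = ({}, Some b)")
  case False
  then obtain S where x: "x = (S, None)" and "b \<in> S" "S \<subseteq> A" "1 < card S"
    using assms(2) by (cases x) (auto simp: elim_on_track_def)
  have "finite S" using \<open>S \<subseteq> A\<close> \<open>finite A\<close> finite_subset by blast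
  have close: "\<forall>k\<in>S. \<bar>f k - v k\<bar> < a" and "\<forall>k\<in>S. k \<noteq> b \<longrightarrow> v k < v b"
    using assms(3,4) \<open>S \<subseteq> A\<close> by auto
  then have "b \<in> {k \<in> S. \<not> 2 * a \<le> Max (f ` S) - f k}"
    using elim_step_keeps_best[OF \<open>finite S\<close> \<open>b \<in> S\<close>] \<open>b \<in> S\<close> by simp
  moreover have "2 * a \<le> Max (f ` S) - f k" if "k \<in> S" "k \<noteq> b" for k
  proof -
    have "f b \<le> Max (f ` S)" using \<open>finite S\<close> \<open>b \<in> S\<close> by simp
    moreover have "4 * a \<le> v b - v k" using assms(5) that \<open>S \<subseteq> A\<close> by auto
    moreover have "\<bar>f k - v k\<bar> < a" "\<bar>f b - v b\<bar> < a" using close that \<open>b \<in> S\<close> by auto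
    ultimately show ?thesis by linarith
  qed
  ultimately have "{k \<in> S. \<not> 2 * a \<le> Max (f ` S) - f k} = {b}" by blast
  then show ?thesis
    using \<open>1 < card S\<close> by (simp add: x elim_update_def elim_step_def Let_def)
qed simp

lemma elimination_identifies_best:
  fixes x :: "nat \<Rightarrow> nat set \<times> nat option" and f :: "nat \<Rightarrow> nat \<Rightarrow> real" and v :: "nat \<Rightarrow> real"
  assumes "finite A" and "b \<in> A" and "1 < card A" and "x 0 = (A, None)"
    and x_Suc: "\<And>n. x (Suc n) = (if act (Suc n) then elim_update (x n) (f (Suc n)) (a (Suc n)) else x n)"
    and close: "\<And>n k. k \<in> A \<Longrightarrow> \<bar>f (Suc n) k - v k\<bar> < a (Suc n)"
    and best: "\<And>k. k \<in> A \<Longrightarrow> k \<noteq> b \<Longrightarrow> v k < v b"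
    and "a \<longlonglongrightarrow> 0" and "\<exists>\<^sub>F n in sequentially. act n"
  shows "\<forall>\<^sub>F n in sequentially. x n = ({}, Some b)"
proof -
  have inv: "elim_on_track A b (x n)" for n
  proof (induction n)
    case 0
    then show ?case using assms(2,3,4) by (simp add: elim_on_track_def)
  next
    case (Suc n)
    then show ?case
      using close best by (auto simp: x_Suc intro!: elim_update_preserves_on_track[OF \<open>finite A\<close>])
  qed
  have "\<forall>\<^sub>F n in sequentially. \<forall>k\<in>A - {b}. a n < (v b - v k) / 4"
    using best \<open>finite A\<close> by (intro eventually_ball_finite ballI order_tendstoD(2)[OF \<open>a \<longlonglongrightarrow> 0\<close>]) auto
  then have "\<exists>\<^sub>F n in sequentially. (0 < n \<and> (\<forall>k\<in>A - {b}. a n < (v b - v k) / 4)) \<and> act n"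
    using \<open>\<exists>\<^sub>F n in sequentially. act n\<close>
    by (intro frequently_eventually_conj eventually_conj eventually_gt_at_top)
  then obtain N where "act (Suc N)" and gap: "\<forall>k\<in>A - {b}. a (Suc N) < (v b - v k) / 4"
    by (auto dest!: frequently_ex gr0_implies_Suc)
  have "elim_update (x N) (f (Suc N)) (a (Suc N)) = ({}, Some b)"
    using close best gap by (intro elim_update_separated[OF \<open>finite A\<close> inv]) force+
  then have finished: "x (Suc N) = ({}, Some b)"
    using \<open>act (Suc N)\<close> by (simp add: x_Suc)
  have "x n = ({}, Some b)" if "Suc N \<le> n" for n
    using that
  proof (induction n rule: dec_induct)
    case (step m)
    then show ?case by (simp add: x_Suc)
  qed (rule finished)
  then show ?thesis by (auto simp: eventually_sequentially)
qed

definition loc_state :: "fe_state \<Rightarrow> nat \<Rightarrow> nat set \<times> nat option" where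
  "loc_state s m = (loc_set s m, loc_out s m)"

definition glob_state :: "fe_state \<Rightarrow> nat set \<times> nat option" where
  "glob_state s = (glob_set s, glob_out s)"

lemma loc_state_fe_init [simp]: "loc_state (fe_init K) m = ({..<K}, None)"
  by (simp add: loc_state_def fe_init_def)

lemma glob_state_fe_init [simp]: "glob_state (fe_init K) = ({..<K}, None)"
  by (simp add: glob_state_def fe_init_def)

lemma loc_state_fe_state_after_Suc:
  "loc_state (fe_state_after c K M \<delta> \<omega> (Suc n)) m
     = elim_update (loc_state (fe_state_after c K M \<delta> \<omega> n) m)
         (\<lambda>k. emp_mean \<omega> k m (Suc n)) (alpha_l K M \<delta> (Suc n))"
  by (simp add: loc_state_def elim_update_def fe_round_def Let_def split: option.split)

lemma glob_state_fe_state_after_Suc: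
  "glob_state (fe_state_after c K M \<delta> \<omega> (Suc n))
     = (if c (Suc n)
        then elim_update (glob_state (fe_state_after c K M \<delta> \<omega> n))
               (\<lambda>k. glob_emp_mean M \<omega> k (Suc n)) (alpha_g K M \<delta> (Suc n))
        else glob_state (fe_state_after c K M \<delta> \<omega> n))"
  by (auto simp: glob_state_def elim_update_def fe_round_def Let_def elim_step_def)

lemma fedelim_correct_iff:
  "fedelim_correct K M \<delta> kl kg \<omega> \<longleftrightarrow>
     (\<exists>n. (\<forall>m\<in>{..<M}. loc_state (fe_state_after fedelim_comm K M \<delta> \<omega> n) m = ({}, Some (kl m)))
        \<and> glob_state (fe_state_after fedelim_comm K M \<delta> \<omega> n) = ({}, Some kg))"
  by (simp add: fedelim_correct_def loc_state_def glob_state_def Let_def Ball_def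
      all_conj_distrib imp_conjR conj_ac)

lemma alpha_l_tendsto_zero:
  assumes "K > 0" and "M > 0" and "\<delta> > 0"
  shows "alpha_l K M \<delta> \<longlonglongrightarrow> 0"
proof -
  have "alpha_l K M \<delta> = (\<lambda>n. sqrt (2 * ln (8 * real K * real M / \<delta> * (real n)\<^sup>2) / real n))"
    by (auto simp: alpha_l_def fun_eq_iff)
  also have "\<dots> \<longlonglongrightarrow> 0"
    using assms by real_asymp
  finally show ?thesis .
qed

lemma alpha_g_tendsto_zero:
  assumes "K > 0" and "M > 0" and "\<delta> > 0"
  shows "alpha_g K M \<delta> \<longlonglongrightarrow> 0"
proof -
  have "alpha_g K M \<delta> = (\<lambda>n. sqrt (2 * ln (8 * real K / \<delta> * (real n)\<^sup>2) / (real M * real n)))"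
    by (auto simp: alpha_g_def fun_eq_iff)
  also have "\<dots> \<longlonglongrightarrow> 0"
    using assms by real_asymp
  finally show ?thesis .
qed

definition fe_confident_at ::
    "nat \<Rightarrow> nat \<Rightarrow> real \<Rightarrow> (nat \<Rightarrow> nat \<Rightarrow> real) \<Rightarrow> nat \<Rightarrow> (nat \<times> nat \<times> nat \<Rightarrow> real) \<Rightarrow> bool" where
  "fe_confident_at K M \<delta> mu n \<omega> \<longleftrightarrow>
     (\<forall>k\<in>{..<K}. (\<forall>m\<in>{..<M}. \<bar>emp_mean \<omega> k m n - mu k m\<bar> < alpha_l K M \<delta> n)
        \<and> \<bar>glob_emp_mean M \<omega> k n - (\<Sum>m<M. mu k m) / M\<bar> < alpha_g K M \<delta> n)"

lemma fedelim_correct_if_confident: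
  assumes "1 < K" and "0 < M" and "0 < \<delta>"
    and "\<forall>m<M. kl m < K \<and> (\<forall>j<K. j \<noteq> kl m \<longrightarrow> mu j m < mu (kl m) m)"
    and "kg < K \<and> (\<forall>j<K. j \<noteq> kg \<longrightarrow>
          (\<Sum>m<M. mu j m) / real M < (\<Sum>m<M. mu kg m) / real M)"
    and "\<And>n. 0 < n \<Longrightarrow> fe_confident_at K M \<delta> mu n \<omega>"
  shows "fedelim_correct K M \<delta> kl kg \<omega>"
proof -
  let ?s = "fe_state_after fedelim_comm K M \<delta> \<omega>"
  have comm: "\<exists>\<^sub>F n in sequentially. fedelim_comm n"
    unfolding frequently_sequentially fedelim_comm_def by (metis less_exp less_imp_le)
  have "\<forall>\<^sub>F n in sequentially. loc_state (?s n) m = ({}, Some (kl m))" if "m < M" for m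
    by (rule elimination_identifies_best[where A = "{..<K}" and act = "\<lambda>_. True"
          and f = "\<lambda>n k. emp_mean \<omega> k m n" and a = "alpha_l K M \<delta>" and v = "\<lambda>k. mu k m"])
      (use assms that alpha_l_tendsto_zero in
        \<open>auto simp: fe_confident_at_def loc_state_fe_state_after_Suc simp del: fe_state_after.simps(2)\<close>)
  moreover have "\<forall>\<^sub>F n in sequentially. glob_state (?s n) = ({}, Some kg)"
    by (rule elimination_identifies_best[where A = "{..<K}" and act = fedelim_comm
          and f = "\<lambda>n k. glob_emp_mean M \<omega> k n" and a = "alpha_g K M \<delta>"
          and v = "\<lambda>k. (\<Sum>m<M. mu k m) / M"])
      (use assms comm alpha_g_tendsto_zero in
        \<open>auto simp: fe_confident_at_def glob_state_fe_state_after_Suc simp del: fe_state_after.simps(2)\<close>)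
  ultimately have "\<forall>\<^sub>F n in sequentially.
      (\<forall>m\<in>{..<M}. loc_state (?s n) m = ({}, Some (kl m))) \<and> glob_state (?s n) = ({}, Some kg)"
    by (intro eventually_conj eventually_ball_finite) auto
  then show ?thesis
    unfolding fedelim_correct_iff by (rule eventually_happens'[OF sequentially_bot])
qed

section \<open>Measurability\<close>

lemma prob_space_reward_space: "prob_space (reward_space K M mu)"
  unfolding reward_space_def
  by (rule prob_space_PiM) (auto simp: prob_space_normal_density split: prod.split)

lemma emp_mean_measurable:
  assumes "k < K" and "m < M"
  shows "(\<lambda>\<omega>. emp_mean \<omega> k m n) \<in> borel_measurable (reward_space K M mu)"
proof -
  have "(\<lambda>\<omega>. \<omega> (k, m, i)) \<in> measurable (reward_space K M mu)
      ((\<lambda>(k, m, i). density lborel (normal_density (mu k m) 1)) (k, m, i))" for i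
    unfolding reward_space_def by (rule measurable_component_singleton) (use assms in auto)
  then have "(\<lambda>\<omega>. \<omega> (k, m, i)) \<in> borel_measurable (reward_space K M mu)" for i
    by (simp cong: measurable_cong_sets)
  then show ?thesis
    unfolding emp_mean_def by measurable
qed

lemma glob_emp_mean_measurable:
  assumes "k < K"
  shows "(\<lambda>\<omega>. glob_emp_mean M \<omega> k n) \<in> borel_measurable (reward_space K M mu)"
  unfolding glob_emp_mean_def using emp_mean_measurable[OF assms]
  by (intro borel_measurable_divide borel_measurable_sum borel_measurable_const) auto

lemma measurable_Collect_finite:
  assumes "finite S" and "\<And>k. k \<in> S \<Longrightarrow> Measurable.pred P (Q k)"
  shows "(\<lambda>\<omega>. {k \<in> S. Q k \<omega>}) \<in> measurable P (count_space (Pow S))"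
proof (subst measurable_count_space_eq2)
  show "finite (Pow S)" using assms(1) by simp
  have "(\<lambda>\<omega>. {k \<in> S. Q k \<omega>}) -` {T} \<inter> space P \<in> sets P" if "T \<in> Pow S" for T
  proof -
    have "(\<lambda>\<omega>. {k \<in> S. Q k \<omega>}) -` {T} \<inter> space P = {\<omega> \<in> space P. \<forall>k\<in>S. k \<in> T \<longleftrightarrow> Q k \<omega>}"
      using that by auto
    also have "\<dots> \<in> sets P"
      using assms unfolding Measurable.pred_def[symmetric] by measurable
    finally show ?thesis .
  qed
  then show "(\<lambda>\<omega>. {k \<in> S. Q k \<omega>}) \<in> space P \<rightarrow> Pow S
      \<and> (\<forall>T\<in>Pow S. (\<lambda>\<omega>. {k \<in> S. Q k \<omega>}) -` {T} \<inter> space P \<in> sets P)"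
    by auto
qed

text \<open>For a fixed active set \<open>S\<close> the update only depends on the finite set of surviving arms,
  so it suffices to condition on the (countably many) possible states.\<close>

lemma measurable_elim_update:
  assumes "finite A"
    and x: "x \<in> measurable P (count_space (Pow A \<times> UNIV))"
    and F: "\<And>k. k \<in> A \<Longrightarrow> F k \<in> borel_measurable P"
  shows "(\<lambda>\<omega>. elim_update (x \<omega>) (\<lambda>k. F k \<omega>) a) \<in> measurable P (count_space (Pow A \<times> UNIV))"
proof (rule measurable_compose_countable'[where f = "\<lambda>y \<omega>. elim_update y (\<lambda>k. F k \<omega>) a", OF _ x])
  show "countable (Pow A \<times> (UNIV :: nat option set))"
    using assms(1) by (intro countable_SIGMA countable_finite countableI_type) auto
  fix y assume "y \<in> Pow A \<times> (UNIV :: nat option set)"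
  then obtain S r where y: "y = (S, r)" and "S \<subseteq> A" by auto
  then have "finite S" using \<open>finite A\<close> finite_subset by blast
  define kept where "kept \<omega> = {k \<in> S. \<not> 2 * a \<le> Max ((\<lambda>k. F k \<omega>) ` S) - F k \<omega>}" for \<omega>
  define h where "h T = (let e = (if 1 < card S then if card T = 1 then ({}, Some (the_elem T)) else (T, None)
      else (S, None)) in (fst e, case snd e of None \<Rightarrow> r | Some k \<Rightarrow> Some k))" for T
  have "kept \<in> measurable P (count_space (Pow S))"
    unfolding kept_def using \<open>finite S\<close> F \<open>S \<subseteq> A\<close>
    by (intro measurable_Collect_finite) (measurable, auto)
  moreover have "h \<in> measurable (count_space (Pow S)) (count_space (Pow A \<times> UNIV))"
    using \<open>S \<subseteq> A\<close> by (force simp: h_def Let_def)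
  ultimately have "(\<lambda>\<omega>. h (kept \<omega>)) \<in> measurable P (count_space (Pow A \<times> UNIV))"
    by (rule measurable_compose)
  moreover have "elim_update y (\<lambda>k. F k \<omega>) a = h (kept \<omega>)" for \<omega>
    by (simp add: y elim_update_def elim_step_def h_def kept_def Let_def)
  ultimately show "(\<lambda>\<omega>. elim_update y (\<lambda>k. F k \<omega>) a) \<in> measurable P (count_space (Pow A \<times> UNIV))"
    by simp
qed

lemma loc_state_measurable:
  assumes "m < M"
  shows "(\<lambda>\<omega>. loc_state (fe_state_after c K M \<delta> \<omega> n) m)
           \<in> measurable (reward_space K M mu) (count_space (Pow {..<K} \<times> UNIV))"
proof (induction n)
  case (Suc n)
  show ?case
    unfolding loc_state_fe_state_after_Suc
    by (rule measurable_elim_update[OF _ Suc.IH]) (use assms emp_mean_measurable in auto)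
qed simp

lemma glob_state_measurable:
  "(\<lambda>\<omega>. glob_state (fe_state_after c K M \<delta> \<omega> n))
     \<in> measurable (reward_space K M mu) (count_space (Pow {..<K} \<times> UNIV))"
proof (induction n)
  case (Suc n)
  show ?case
    unfolding glob_state_fe_state_after_Suc
    using Suc.IH
    by (cases "c (Suc n)") (auto intro: measurable_elim_update[OF _ Suc.IH] glob_emp_mean_measurable)
qed simp

lemma fedelim_correct_sets:
  "{\<omega> \<in> space (reward_space K M mu). fedelim_correct K M \<delta> kl kg \<omega>} \<in> sets (reward_space K M mu)"
proof -
  have "Measurable.pred (reward_space K M mu) (fedelim_correct K M \<delta> kl kg)"
    unfolding fedelim_correct_iff
    by (intro pred_intros_countable pred_intros_logic pred_intros_finite
        pred_eq_const1[OF loc_state_measurable] pred_eq_const1[OF glob_state_measurable]) auto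
  then show ?thesis by (simp add: Measurable.pred_def)
qed

lemma fe_confident_at_measurable:
  "Measurable.pred (reward_space K M mu) (fe_confident_at K M \<delta> mu n)"
  unfolding fe_confident_at_def
proof (intro pred_intros_finite pred_intros_logic)
  fix k m assume "k \<in> {..<K}" and "m \<in> {..<M}"
  then show "Measurable.pred (reward_space K M mu) (\<lambda>\<omega>. \<bar>emp_mean \<omega> k m n - mu k m\<bar> < alpha_l K M \<delta> n)"
    unfolding Measurable.pred_def
    by (intro borel_measurable_less borel_measurable_abs borel_measurable_diff borel_measurable_const
        emp_mean_measurable) auto
next
  fix k assume "k \<in> {..<K}"
  then show "Measurable.pred (reward_space K M mu)
      (\<lambda>\<omega>. \<bar>glob_emp_mean M \<omega> k n - (\<Sum>m<M. mu k m) / M\<bar> < alpha_g K M \<delta> n)"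
    unfolding Measurable.pred_def
    by (intro borel_measurable_less borel_measurable_abs borel_measurable_diff borel_measurable_const
        glob_emp_mean_measurable) auto
qed auto

section \<open>The union bound\<close>

lemma (in finite_measure) measure_UNION_le_sums:
  assumes "range A \<subseteq> sets M" and "\<And>n. measure M (A n) \<le> f n" and "f sums s"
  shows "measure M (\<Union>n. A n) \<le> s"
proof -
  have "summable (\<lambda>n. measure M (A n))"
    using assms(2) by (intro summable_comparison_test'[OF sums_summable[OF \<open>f sums s\<close>]]) auto
  then have "measure M (\<Union>n. A n) \<le> (\<Sum>n. measure M (A n))"
    using assms(1) by (intro finite_measure_subadditive_countably) auto
  also have "\<dots> \<le> s"
    using assms \<open>summable (\<lambda>n. measure M (A n))\<close> by (auto intro!: suminf_le simp: sums_iff)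
  finally show ?thesis .
qed

lemma prob_not_confident_at:
  assumes "0 < K" and "0 < M" and "0 < n" and "0 < \<delta>" and "\<delta> < 1"
  shows "measure (reward_space K M mu) {\<omega> \<in> space (reward_space K M mu).
           \<not> fe_confident_at K M \<delta> mu n \<omega>} \<le> \<delta> / (2 * (real n)\<^sup>2)"
proof -
  let ?P = "reward_space K M mu"
  define L where "L k m = {\<omega> \<in> space ?P. alpha_l K M \<delta> n \<le> \<bar>emp_mean \<omega> k m n - mu k m\<bar>}" for k m
  define G where "G k = {\<omega> \<in> space ?P.
      alpha_g K M \<delta> n \<le> \<bar>glob_emp_mean M \<omega> k n - (\<Sum>m<M. mu k m) / M\<bar>}" for k
  have L_sets: "L k m \<in> sets ?P" if "k < K" "m < M" for k m
    unfolding L_def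
    by (intro borel_measurable_le borel_measurable_const borel_measurable_abs borel_measurable_diff
        emp_mean_measurable that)
  have G_sets: "G k \<in> sets ?P" if "k < K" for k
    unfolding G_def
    by (intro borel_measurable_le borel_measurable_const borel_measurable_abs borel_measurable_diff
        glob_emp_mean_measurable that)
  have "{\<omega> \<in> space ?P. \<not> fe_confident_at K M \<delta> mu n \<omega>} = (\<Union>k<K. (\<Union>m<M. L k m) \<union> G k)"
    unfolding fe_confident_at_def L_def G_def by (auto simp del: lessThan_iff simp add: not_less)
  also have "measure ?P \<dots> \<le> (\<Sum>k<K. measure ?P ((\<Union>m<M. L k m) \<union> G k))"
    using L_sets G_sets by (intro measure_UNION_le) auto
  also have "\<dots> \<le> (\<Sum>k<K. (\<Sum>m<M. measure ?P (L k m)) + measure ?P (G k))"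
    using L_sets G_sets
    by (intro sum_mono order.trans[OF measure_Un_le] add_mono measure_UNION_le) auto
  also have "\<dots> \<le> (\<Sum>k<K. (\<Sum>m<M. \<delta> / (4 * real K * real M * (real n)\<^sup>2)) + \<delta> / (4 * real K * (real n)\<^sup>2))"
    unfolding L_def G_def using assms
    by (intro sum_mono add_mono prob_emp_mean_deviation prob_glob_emp_mean_deviation) auto
  also have "\<dots> = \<delta> / (2 * (real n)\<^sup>2)"
    using assms by (simp add: field_simps)
  finally show ?thesis .
qed

lemma inverse_square_le_telescope:
  fixes c :: real
  assumes "0 \<le> c"
  shows "c / (2 * (real (Suc n))\<^sup>2) \<le> c * (1 / Suc n - 1 / Suc (Suc n))"
proof -
  have "Suc n * Suc (Suc n) \<le> 2 * (Suc n)\<^sup>2"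
    by (simp add: power2_eq_square)
  then have "real (Suc n * Suc (Suc n)) \<le> real (2 * (Suc n)\<^sup>2)"
    by (simp only: of_nat_le_iff)
  then have "real (Suc n) * real (Suc (Suc n)) \<le> 2 * (real (Suc n))\<^sup>2"
    by (simp only: of_nat_mult of_nat_power of_nat_numeral)
  then have "1 / (2 * (real (Suc n))\<^sup>2) \<le> 1 / (real (Suc n) * real (Suc (Suc n)))"
    by (intro divide_left_mono) auto
  also have "\<dots> = 1 / Suc n - 1 / Suc (Suc n)"
    by (simp add: field_simps)
  finally have "c * (1 / (2 * (real (Suc n))\<^sup>2)) \<le> c * (1 / Suc n - 1 / Suc (Suc n))"
    by (rule mult_left_mono) (rule assms)
  then show ?thesis by simp
qed

lemma prob_ever_unconfident_le:
  assumes "0 < K" and "0 < M" and "0 < \<delta>" and "\<delta> < 1"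
  shows "measure (reward_space K M mu)
           (\<Union>n. {\<omega> \<in> space (reward_space K M mu). \<not> fe_confident_at K M \<delta> mu (Suc n) \<omega>}) \<le> \<delta>"
proof (rule finite_measure.measure_UNION_le_sums)
  show "finite_measure (reward_space K M mu)"
    using prob_space_reward_space prob_space_def by blast
  show "range (\<lambda>n. {\<omega> \<in> space (reward_space K M mu). \<not> fe_confident_at K M \<delta> mu (Suc n) \<omega>})
      \<subseteq> sets (reward_space K M mu)"
    using fe_confident_at_measurable by auto
  fix n
  have "measure (reward_space K M mu) {\<omega> \<in> space (reward_space K M mu).
      \<not> fe_confident_at K M \<delta> mu (Suc n) \<omega>} \<le> \<delta> / (2 * (real (Suc n))\<^sup>2)"
    using assms by (intro prob_not_confident_at) auto
  also have "\<dots> \<le> \<delta> * (1 / Suc n - 1 / Suc (Suc n))"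
    using assms by (intro inverse_square_le_telescope) auto
  finally show "measure (reward_space K M mu) {\<omega> \<in> space (reward_space K M mu).
      \<not> fe_confident_at K M \<delta> mu (Suc n) \<omega>} \<le> \<delta> * (1 / Suc n - 1 / Suc (Suc n))" .
next
  show "(\<lambda>n. \<delta> * (1 / Suc n - 1 / Suc (Suc n))) sums \<delta>"
    using sums_mult[OF telescope_sums'[OF LIMSEQ_Suc[OF lim_inverse_n']], of \<delta>] by simp
qed

theorem theorem1:
  fixes K M :: nat and \<delta> :: real and mu :: "nat \<Rightarrow> nat \<Rightarrow> real"
    and kl :: "nat \<Rightarrow> nat" and kg :: nat
  assumes "K > 1" and "M > 1" and "0 < \<delta>" and "\<delta> < 1"
    and "\<forall>m<M. kl m < K \<and> (\<forall>j<K. j \<noteq> kl m \<longrightarrow> mu j m < mu (kl m) m)"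
    and "kg < K \<and> (\<forall>j<K. j \<noteq> kg \<longrightarrow>
           (\<Sum>m<M. mu j m) / real M < (\<Sum>m<M. mu kg m) / real M)"
  shows "measure (reward_space K M mu)
           {\<omega> \<in> space (reward_space K M mu). fedelim_correct K M \<delta> kl kg \<omega>} \<ge> 1 - \<delta>"
proof -
  let ?P = "reward_space K M mu"
  interpret prob_space ?P by (rule prob_space_reward_space)
  define bad where "bad = (\<Union>n. {\<omega> \<in> space ?P. \<not> fe_confident_at K M \<delta> mu (Suc n) \<omega>})"
  have "bad \<in> sets ?P"
    using fe_confident_at_measurable by (auto simp: bad_def)
  have "space ?P - bad \<subseteq> {\<omega> \<in> space ?P. fedelim_correct K M \<delta> kl kg \<omega>}"
    using assms by (auto simp: bad_def gr0_conv_Suc intro!: fedelim_correct_if_confident)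
  then have "measure ?P (space ?P - bad) \<le> measure ?P {\<omega> \<in> space ?P. fedelim_correct K M \<delta> kl kg \<omega>}"
    by (intro finite_measure_mono fedelim_correct_sets)
  moreover have "measure ?P bad \<le> \<delta>"
    unfolding bad_def using assms by (intro prob_ever_unconfident_le) auto
  ultimately show ?thesis
    using prob_compl[OF \<open>bad \<in> sets ?P\<close>] by linarith
qed

end
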